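(* There is an absolute constant $C>0$ such that for every $h\in\mathbb N$ and every $P\in\mathcal C(h)$ all of whose holes are axis-aligned rectangles, $\varrho(P)\le C$.
   Context: For $h\in\mathbb N$, $\mathcal C(h)$ denotes the family of polygonal domains $P=P_0\setminus\bigcup_{i=1}^h \operatorname{int}(P_i)$, where $P_0$ is a convex polygon in the plane and $P_1,\dots,P_h$ (the holes) are pairwise disjoint convex polygons contained in the interior of $P_0$. For $s,t\in P$, ${\rm geod}(s,t)$ is the infimum of the Euclidean lengths of polygonal paths from $s$ to $t$ contained in $P$; ${\rm diam}_2(P)=\sup_{s,t\in P}|st|$, ${\rm diam}_g(P)=\sup_{s,t\in P}{\rm geod}(s,t)$, and $\varrho(P)={\rm diam}_g(P)/{\rm diam}_2(P)$. *)

theory Defs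
  imports "HOL-Analysis.Analysis"
begin

type_synonym pt = "real ^ 2"

definition convex_polygon :: "pt set \<Rightarrow> bool" where
  "convex_polygon S \<longleftrightarrow> (\<exists>V. finite V \<and> S = convex hull V) \<and> interior S \<noteq> {}"

definition axis_rectangle :: "pt set \<Rightarrow> bool" where
  "axis_rectangle S \<longleftrightarrow> (\<exists>a b. a$1 < b$1 \<and> a$2 < b$2 \<and> S = cbox a b)"

definition polygonal_domain :: "pt set \<Rightarrow> nat \<Rightarrow> (nat \<Rightarrow> pt set) \<Rightarrow> pt set" where
  "polygonal_domain P0 h H = P0 - (\<Union>i\<in>{1..h}. interior (H i))"

definition in_class_C :: "nat \<Rightarrow> pt set \<Rightarrow> (nat \<Rightarrow> pt set) \<Rightarrow> bool" where
  "in_class_C h P0 H \<longleftrightarrow> convex_polygon P0 \<and>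
     (\<forall>i\<in>{1..h}. convex_polygon (H i) \<and> H i \<subseteq> interior P0) \<and>
     (\<forall>i\<in>{1..h}. \<forall>j\<in>{1..h}. i \<noteq> j \<longrightarrow> H i \<inter> H j = {})"

definition polygonal_path :: "pt set \<Rightarrow> pt \<Rightarrow> pt \<Rightarrow> pt list \<Rightarrow> bool" where
  "polygonal_path P s t ps \<longleftrightarrow> ps \<noteq> [] \<and> hd ps = s \<and> last ps = t \<and>
     (\<forall>i < length ps - 1. closed_segment (ps ! i) (ps ! Suc i) \<subseteq> P)"

definition path_len :: "pt list \<Rightarrow> real" where
  "path_len ps = (\<Sum>i < length ps - 1. dist (ps ! i) (ps ! Suc i))"

definition geod :: "pt set \<Rightarrow> pt \<Rightarrow> pt \<Rightarrow> real" where
  "geod P s t = Inf {path_len ps | ps. polygonal_path P s t ps}"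

definition diam2 :: "pt set \<Rightarrow> real" where
  "diam2 P = Sup {dist s t | s t. s \<in> P \<and> t \<in> P}"

definition diamg :: "pt set \<Rightarrow> real" where
  "diamg P = Sup {geod P s t | s t. s \<in> P \<and> t \<in> P}"

definition rho :: "pt set \<Rightarrow> real" where
  "rho P = diamg P / diam2 P"

end

theory Submission
  imports Defs
begin

text \<open>
  Let \<open>u(x)\<close> be the highest point of \<open>P\<^sub>0\<close> above the abscissa \<open>x\<close>. These points lie on the
  boundary of \<open>P\<^sub>0\<close>, hence avoid the holes, and their height is a concave function of \<open>x\<close>:
  continuous, increasing up to the summit \<open>p\<^sub>T\<close> of \<open>P\<^sub>0\<close> and decreasing after it.

  From a point \<open>p\<close> of the domain walk straight up. If the vertical segment to \<open>u(p\<^sub>1)\<close> meets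
  holes, stop at the bottom edge of the lowest one, walk left to its lower left corner and up its
  left edge, and start again from its upper left corner. Since every step goes up or left, this
  staircase reaches some \<open>u(x)\<close> with length at most the \<open>\<ell>\<^sub>1\<close> distance, i.e. at most twice the
  Euclidean distance. From \<open>u(x)\<close> the upper boundary leads monotonically to \<open>p\<^sub>T\<close>; short chords of
  it stay in the domain because the holes keep a positive distance from the boundary of \<open>P\<^sub>0\<close>, and
  by monotonicity their total length is again at most the \<open>\<ell>\<^sub>1\<close> distance. Joining two points
  through \<open>p\<^sub>T\<close> gives \<open>geod \<le> 8 diam\<^sub>2\<close>, so \<open>\<rho> \<le> 8\<close>.
\<close>

lemma polygonal_path_singleton: "polygonal_path P s t [x] \<longleftrightarrow> s = x \<and> t = x"
  by (auto simp: polygonal_path_def)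

lemma polygonal_path_Cons:
  "polygonal_path P s t (x # y # zs) \<longleftrightarrow>
     s = x \<and> closed_segment x y \<subseteq> P \<and> polygonal_path P y t (y # zs)"
proof -
  have "(\<forall>i < length (x#y#zs) - 1. closed_segment ((x#y#zs) ! i) ((x#y#zs) ! Suc i) \<subseteq> P)
     \<longleftrightarrow> closed_segment x y \<subseteq> P \<and>
         (\<forall>i < length (y#zs) - 1. closed_segment ((y#zs) ! i) ((y#zs) ! Suc i) \<subseteq> P)"
    by (simp only: length_Cons diff_Suc_1 All_less_Suc2 nth_Cons_0 nth_Cons_Suc)
  then show ?thesis by (auto simp: polygonal_path_def)
qed

lemma path_len_singleton [simp]: "path_len [x] = 0"
  by (simp add: path_len_def)

lemma path_len_Cons [simp]: "path_len (x # y # zs) = dist x y + path_len (y # zs)"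
  unfolding path_len_def by (simp only: length_Cons diff_Suc_1 sum.lessThan_Suc_shift nth_Cons_0 nth_Cons_Suc)

lemma path_len_nonneg: "path_len ps \<ge> 0"
  unfolding path_len_def by (intro sum_nonneg) auto

lemma polygonal_path_segment:
  "closed_segment x y \<subseteq> P \<Longrightarrow> polygonal_path P x y [x, y]"
  by (simp add: polygonal_path_Cons polygonal_path_singleton)

lemma polygonal_path_append:
  assumes "polygonal_path P a b xs" "polygonal_path P b c ys"
  shows "polygonal_path P a c (xs @ tl ys) \<and> path_len (xs @ tl ys) = path_len xs + path_len ys"
  using assms
proof (induction xs arbitrary: a rule: induct_list012)
  case 1 then show ?case by (simp add: polygonal_path_def)
next
  case (2 x)
  then have "a = x" "b = x" by (simp_all add: polygonal_path_singleton)
  moreover obtain ys' where "ys = b # ys'"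
    using "2.prems"(2) by (cases ys) (auto simp: polygonal_path_def)
  ultimately show ?case using "2.prems"(2) by simp
next
  case (3 x y zs)
  from "3.prems"(1) have "a = x" "closed_segment x y \<subseteq> P" "polygonal_path P y b (y # zs)"
    by (simp_all add: polygonal_path_Cons)
  with "3.IH"(2)[OF _ "3.prems"(2)] show ?case by (simp add: polygonal_path_Cons)
qed

lemma polygonal_path_rev:
  assumes "polygonal_path P a b xs"
  shows "polygonal_path P b a (rev xs) \<and> path_len (rev xs) = path_len xs"
  using assms
proof (induction xs arbitrary: a rule: induct_list012)
  case 1 then show ?case by (simp add: polygonal_path_def)
next
  case (2 x) then show ?case by (simp add: polygonal_path_singleton)
next
  case (3 x y zs)
  then have IH: "polygonal_path P b y (rev (y # zs)) \<and> path_len (rev (y # zs)) = path_len (y # zs)"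
    and "a = x" and xy: "closed_segment y x \<subseteq> P"
    by (auto simp: polygonal_path_Cons closed_segment_commute)
  from polygonal_path_append[OF IH[THEN conjunct1] polygonal_path_segment[OF xy]] IH \<open>a = x\<close>
  show ?case by (simp add: dist_commute)
qed

lemma polygonal_path_upt:
  assumes "\<And>k. k < n \<Longrightarrow> closed_segment (g k) (g (Suc k)) \<subseteq> P"
  shows "polygonal_path P (g 0) (g n) (map g [0..<Suc n])"
    and "path_len (map g [0..<Suc n]) = (\<Sum>k<n. dist (g k) (g (Suc k)))"
proof -
  have nth: "map g [0..<Suc n] ! k = g k" if "k \<le> n" for k
    using that by (simp add: nth_map_upt del: upt_Suc)
  show "polygonal_path P (g 0) (g n) (map g [0..<Suc n])"
    unfolding polygonal_path_def
    using assms nth[of 0] nth[of n] by (auto simp: hd_map last_map nth simp del: upt_Suc)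
  show "path_len (map g [0..<Suc n]) = (\<Sum>k<n. dist (g k) (g (Suc k)))"
    unfolding path_len_def length_map length_upt
    by (intro sum.cong) (simp_all add: nth del: upt_Suc)
qed

lemma geod_le_path_len:
  assumes "polygonal_path P s t ps"
  shows "geod P s t \<le> path_len ps"
  unfolding geod_def using assms path_len_nonneg
  by (intro cInf_lower bdd_belowI[where m = 0]) blast+

lemma dist_le_diam2:
  assumes "bounded S" "s \<in> S" "t \<in> S"
  shows "dist s t \<le> diam2 S"
proof -
  obtain M where M: "\<And>x. x \<in> S \<Longrightarrow> norm x \<le> M" using assms(1) by (auto simp: bounded_iff)
  have "dist s t \<le> 2 * M" if "s \<in> S" "t \<in> S" for s t
  proof -
    have "dist s t \<le> norm s + norm t" by (simp add: dist_norm norm_triangle_ineq4)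
    then show ?thesis using M[OF that(1)] M[OF that(2)] by linarith
  qed
  then have "bdd_above {dist s t | s t. s \<in> S \<and> t \<in> S}"
    by (intro bdd_aboveI[where M = "2 * M"]) blast
  then show ?thesis unfolding diam2_def using assms by (intro cSup_upper) blast+
qed

lemma rho_le:
  assumes "S \<noteq> {}" "diam2 S > 0" "\<And>s t. s \<in> S \<Longrightarrow> t \<in> S \<Longrightarrow> geod S s t \<le> C * diam2 S"
  shows "rho S \<le> C"
proof -
  obtain s where "s \<in> S" using assms(1) by blast
  then have "{geod S s t | s t. s \<in> S \<and> t \<in> S} \<noteq> {}" by blast
  then have "diamg S \<le> C * diam2 S"
    unfolding diamg_def using assms(3) by (intro cSup_least) auto
  then show ?thesis unfolding rho_def using assms(2) by (simp add: divide_le_eq)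
qed

definition vec2 :: "real \<Rightarrow> real \<Rightarrow> pt" where
  "vec2 x y = (\<chi> i. if i = 1 then x else y)"

lemma vec2_nth [simp]: "vec2 x y $ 1 = x" "vec2 x y $ 2 = y"
  by (simp_all add: vec2_def)

lemma pt_eq_iff: "(p::pt) = q \<longleftrightarrow> p$1 = q$1 \<and> p$2 = q$2"
  by (simp add: vec_eq_iff forall_2)

lemma vec2_eta [simp]: "vec2 (p$1) (p$2) = p"
  by (simp add: pt_eq_iff)

lemma continuous_vec2_right: "continuous (at y) (\<lambda>y. vec2 x y)"
proof -
  have "(\<lambda>y. vec2 x y) = (\<lambda>y. x *\<^sub>R axis 1 1 + y *\<^sub>R axis 2 1)"
    by (auto simp: pt_eq_iff axis_def)
  moreover have "continuous (at y) (\<lambda>y. x *\<^sub>R axis 1 1 + y *\<^sub>R axis 2 1 :: pt)"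
    by (intro continuous_intros)
  ultimately show ?thesis by simp
qed

lemma abs_component_diff_le_dist: "\<bar>p$i - q$i\<bar> \<le> dist (p::pt) q"
  using component_le_norm_cart[of "p - q" i] by (simp add: dist_norm)

lemma dist_le_sum_abs_component_diff: "dist (p::pt) q \<le> \<bar>p$1 - q$1\<bar> + \<bar>p$2 - q$2\<bar>"
  using norm_le_l1_cart[of "p - q"] by (simp add: dist_norm sum_2)

lemma sum_abs_component_diff_le_dist: "\<bar>p$1 - q$1\<bar> + \<bar>p$2 - q$2\<bar> \<le> 2 * dist (p::pt) q"
  using abs_component_diff_le_dist[of p 1 q] abs_component_diff_le_dist[of p 2 q] by linarith

lemma dist_vec2_vertical: "dist (vec2 x y) (vec2 x y') = \<bar>y - y'\<bar>"
  using dist_le_sum_abs_component_diff[of "vec2 x y" "vec2 x y'"]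
    abs_component_diff_le_dist[where p = "vec2 x y" and q = "vec2 x y'" and i = 2] by simp

lemma dist_vec2_horizontal: "dist (vec2 x y) (vec2 x' y) = \<bar>x - x'\<bar>"
  using dist_le_sum_abs_component_diff[of "vec2 x y" "vec2 x' y"]
    abs_component_diff_le_dist[where p = "vec2 x y" and q = "vec2 x' y" and i = 1] by simp

lemma closed_segment_component_eq:
  assumes "z \<in> closed_segment (p::pt) q" "p$i = c" "q$i = c"
  shows "z$i = c"
proof -
  obtain u where "z = (1-u) *\<^sub>R p + u *\<^sub>R q" using assms(1) by (auto simp: closed_segment_def)
  then have "z$i = (1-u) * p$i + u * q$i" by simp
  then show ?thesis using assms by (simp add: algebra_simps)
qed

lemma closed_segment_component_bounds:
  assumes "z \<in> closed_segment (p::pt) q" "p$i \<le> q$i"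
  shows "p$i \<le> z$i \<and> z$i \<le> q$i"
proof -
  obtain u where u: "0 \<le> u" "u \<le> 1" "z = (1-u) *\<^sub>R p + u *\<^sub>R q"
    using assms(1) by (auto simp: closed_segment_def)
  then have "z$i = (1-u) * p$i + u * q$i" by simp
  then have "z$i = p$i + u * (q$i - p$i)" by (simp add: algebra_simps)
  moreover have "u * (q$i - p$i) \<le> q$i - p$i" using u assms(2) by (simp add: mult_left_le_one_le)
  ultimately show ?thesis using u assms(2) by simp
qed

lemma vec2_in_vertical_segment:
  assumes "p$1 = q$1" "p$2 \<le> y" "y \<le> q$2"
  shows "vec2 (p$1) y \<in> closed_segment (p::pt) q"
proof (cases "p$2 = q$2")
  case True
  then have "vec2 (p$1) y = p" using assms by (simp add: pt_eq_iff)
  then show ?thesis by simp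
next
  case False
  define u where "u = (y - p$2) / (q$2 - p$2)"
  have q: "q$2 - p$2 > 0" using False assms by auto
  have "0 \<le> u" "u \<le> 1" using assms q by (auto simp: u_def divide_simps)
  moreover have "u * (q$2 - p$2) = y - p$2" using q by (simp add: u_def)
  then have "vec2 (p$1) y = (1-u) *\<^sub>R p + u *\<^sub>R q"
    using assms(1) by (simp add: pt_eq_iff algebra_simps)
  ultimately show ?thesis by (auto simp: closed_segment_def)
qed

lemma concave_on_lower_bound_between:
  fixes g :: "real \<Rightarrow> real"
  assumes "concave_on S g" "x \<in> S" "w \<in> S" "x \<noteq> w" "y \<in> closed_segment x w"
  shows "g x + (y - x) / (w - x) * (g w - g x) \<le> g y"
proof -
  define t where "t = (y - x) / (w - x)"
  have "0 \<le> t" "t \<le> 1"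
    using assms(4,5) by (auto simp: t_def closed_segment_eq_real_ivl divide_simps split: if_splits)
  moreover have "t * (w - x) = y - x" using assms(4) by (simp add: t_def)
  then have "(1 - t) * x + t * w = y" by (simp add: algebra_simps)
  ultimately have "(1 - t) * g x + t * g w \<le> g y"
    using concave_onD[OF assms(1), of t x w] assms(2,3) by simp
  then have "g x + t * (g w - g x) \<le> g y" by (simp add: algebra_simps)
  then show ?thesis unfolding t_def .
qed

lemma concave_on_ge_between:
  fixes g :: "real \<Rightarrow> real"
  assumes "concave_on S g" "x \<in> S" "w \<in> S" "g x \<le> g w" "y \<in> closed_segment x w"
  shows "g x \<le> g y"
proof (cases "x = w")
  case False
  have "0 \<le> (y - x) / (w - x)"
    using assms(5) by (auto simp: closed_segment_eq_real_ivl divide_simps split: if_splits)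
  then have "0 \<le> (y - x) / (w - x) * (g w - g x)"
    using assms(4) by (intro mult_nonneg_nonneg) simp_all
  then show ?thesis using concave_on_lower_bound_between[OF assms(1-3) False assms(5)] by linarith
qed (use assms in auto)

lemma concave_on_monotone_around_max:
  fixes g :: "real \<Rightarrow> real"
  assumes "concave_on S g" "c \<in> S" "\<And>x. x \<in> S \<Longrightarrow> g x \<le> g c"
  shows "mono_on (S \<inter> {..c}) g" and "antimono_on (S \<inter> {c..}) g"
proof -
  show "mono_on (S \<inter> {..c}) g"
    by (intro mono_onI concave_on_ge_between[OF assms(1) _ assms(2) assms(3)])
      (auto simp: closed_segment_eq_real_ivl)
  show "antimono_on (S \<inter> {c..}) g"
    by (intro monotone_onI concave_on_ge_between[OF assms(1) _ assms(2) assms(3)])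
      (auto simp: closed_segment_eq_real_ivl)
qed

lemma concave_on_lower_semicontinuous_towards:
  fixes g :: "real \<Rightarrow> real"
  assumes "concave_on S g" "x \<in> S" "w \<in> S" "e > 0"
  shows "\<exists>d>0. \<forall>y \<in> closed_segment x w. \<bar>y - x\<bar> < d \<longrightarrow> g x - e < g y"
proof (cases "x = w")
  case False
  define M where "M = \<bar>g w - g x\<bar> + 1"
  have M: "M > 0" by (simp add: M_def)
  have wx: "\<bar>w - x\<bar> > 0" using False by simp
  have "g x - e < g y" if y: "y \<in> closed_segment x w" "\<bar>y - x\<bar> < e * \<bar>w - x\<bar> / M" for y
  proof -
    define t where "t = (y - x) / (w - x)"
    have "\<bar>t\<bar> < e / M"
      using y(2) wx M by (simp add: t_def abs_divide divide_simps mult.commute)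
    then have "\<bar>t\<bar> * M < e" using M by (simp add: less_divide_eq)
    moreover have "\<bar>t\<bar> * \<bar>g w - g x\<bar> \<le> \<bar>t\<bar> * M" by (simp add: M_def mult_left_mono)
    moreover have "- (t * (g w - g x)) \<le> \<bar>t\<bar> * \<bar>g w - g x\<bar>"
      using abs_ge_self[of "- (t * (g w - g x))"] by (simp add: abs_mult)
    ultimately show ?thesis
      using concave_on_lower_bound_between[OF assms(1-3) False y(1)] by (simp add: t_def)
  qed
  moreover have "e * \<bar>w - x\<bar> / M > 0" using assms(4) wx M by simp
  ultimately show ?thesis by blast
qed (use assms in \<open>auto intro: exI[of _ 1]\<close>)

lemma concave_on_Icc_lower_semicontinuous:
  fixes g :: "real \<Rightarrow> real"
  assumes "concave_on {a..b} g" "x \<in> {a..b}" "e > 0"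
  shows "\<exists>d>0. \<forall>y\<in>{a..b}. \<bar>y - x\<bar> < d \<longrightarrow> g x - e < g y"
proof -
  obtain d1 where d1: "d1 > 0" "\<forall>y \<in> closed_segment x a. \<bar>y - x\<bar> < d1 \<longrightarrow> g x - e < g y"
    using concave_on_lower_semicontinuous_towards[OF assms(1,2) _ assms(3), of a] assms(2) by auto
  obtain d2 where d2: "d2 > 0" "\<forall>y \<in> closed_segment x b. \<bar>y - x\<bar> < d2 \<longrightarrow> g x - e < g y"
    using concave_on_lower_semicontinuous_towards[OF assms(1,2) _ assms(3), of b] assms(2) by auto
  have "g x - e < g y" if "y \<in> {a..b}" "\<bar>y - x\<bar> < min d1 d2" for y
  proof -
    have "y \<in> closed_segment x a \<or> y \<in> closed_segment x b"
      using that(1) assms(2) by (auto simp: closed_segment_eq_real_ivl)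
    then show ?thesis using d1(2) d2(2) that(2) by auto
  qed
  then show ?thesis using d1(1) d2(1) by (intro exI[of _ "min d1 d2"]) auto
qed

lemma sum_abs_diff_monotone:
  fixes a :: "nat \<Rightarrow> 'a::linordered_idom"
  assumes "(\<forall>i<n. a i \<le> a (Suc i)) \<or> (\<forall>i<n. a (Suc i) \<le> a i)"
  shows "(\<Sum>i<n. \<bar>a (Suc i) - a i\<bar>) = \<bar>a n - a 0\<bar>"
proof -
  have incr: "(\<Sum>i<n. \<bar>b (Suc i) - b i\<bar>) = \<bar>b n - b 0\<bar>" if "\<forall>i<n. b i \<le> b (Suc i)"
    for b :: "nat \<Rightarrow> 'a"
  proof -
    have "(\<Sum>i<n. \<bar>b (Suc i) - b i\<bar>) = (\<Sum>i<n. b (Suc i) - b i)"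
      using that by (intro sum.cong) auto
    also have "\<dots> = b n - b 0" by (rule sum_lessThan_telescope)
    finally show ?thesis by (metis abs_of_nonneg sum_abs_ge_zero)
  qed
  from assms show ?thesis
  proof
    assume "\<forall>i<n. a (Suc i) \<le> a i"
    then show ?thesis using incr[of "\<lambda>i. - a i"] by (simp add: abs_minus_commute)
  qed (rule incr)
qed

lemma uniform_partition:
  fixes a b m :: real
  assumes "a \<le> b" "m > 0"
  obtains n :: nat and h where "n \<ge> 1" "0 \<le> h" "h < m" "real n * h = b - a"
proof
  define n where "n = nat \<lceil>(b - a) / m\<rceil> + 1"
  show "n \<ge> 1" by (simp add: n_def)
  show "0 \<le> (b - a) / n" using assms(1) by simp
  show "real n * ((b - a) / n) = b - a" by (simp add: n_def)
  have "(b - a) / m < n" unfolding n_def by linarith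
  then have "b - a < m * n" using assms(2) by (simp add: divide_less_eq mult.commute)
  then show "(b - a) / n < m" by (simp add: n_def divide_less_eq mult.commute)
qed

locale rectangle_holes =
  fixes P0 :: "pt set" and I :: "nat set" and A B :: "nat \<Rightarrow> pt" and pl pr pT :: pt
  assumes finite_holes: "finite I"
    and compact_P0: "compact P0" and convex_P0: "convex P0"
    and holes_in_interior: "\<And>i. i \<in> I \<Longrightarrow> cbox (A i) (B i) \<subseteq> interior P0"
    and holes_disjoint: "\<And>i j. i \<in> I \<Longrightarrow> j \<in> I \<Longrightarrow> i \<noteq> j \<Longrightarrow> cbox (A i) (B i) \<inter> cbox (A j) (B j) = {}"
    and leftmost: "pl \<in> P0" "\<And>p. p \<in> P0 \<Longrightarrow> pl$1 \<le> p$1"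
    and rightmost: "pr \<in> P0" "\<And>p. p \<in> P0 \<Longrightarrow> p$1 \<le> pr$1"
    and summit: "pT \<in> P0" "\<And>p. p \<in> P0 \<Longrightarrow> p$2 \<le> pT$2"
    and width_pos: "pl$1 < pr$1"
begin

definition region :: "pt set" where
  "region = P0 - (\<Union>i\<in>I. box (A i) (B i))"

definition upper :: "real \<Rightarrow> real" where
  "upper x = Sup {y. vec2 x y \<in> P0}"

abbreviation upper_pt :: "real \<Rightarrow> pt" where
  "upper_pt x \<equiv> vec2 x (upper x)"

abbreviation "xl \<equiv> pl$1"
abbreviation "xr \<equiv> pr$1"

lemma region_subset: "region \<subseteq> P0"
  by (auto simp: region_def)

lemma bounded_region: "bounded region"
  using bounded_subset[OF compact_imp_bounded[OF compact_P0] region_subset] .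

lemma first_coord_bounds: "p \<in> P0 \<Longrightarrow> p$1 \<in> {xl..xr}"
  using leftmost rightmost by auto

lemma column_nonempty:
  assumes "x \<in> {xl..xr}"
  shows "\<exists>y. vec2 x y \<in> P0"
proof -
  define t where "t = (x - xl) / (xr - xl)"
  have t: "0 \<le> t" "t \<le> 1" using assms width_pos by (auto simp: t_def divide_simps)
  define q where "q = (1 - t) *\<^sub>R pl + t *\<^sub>R pr"
  have "q \<in> P0" using convexD[OF convex_P0 leftmost(1) rightmost(1)] t by (auto simp: q_def)
  moreover have "t * (xr - xl) = x - xl" using width_pos by (simp add: t_def)
  then have "q$1 = x" by (simp add: q_def algebra_simps)
  ultimately show ?thesis by (metis vec2_eta)
qed

lemma column_bdd_above: "bdd_above {y. vec2 x y \<in> P0}"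
  using summit(2) by (intro bdd_aboveI[where M = "pT$2"]) fastforce

lemma column_closed: "closed {y. vec2 x y \<in> P0}"
proof -
  have "{y. vec2 x y \<in> P0} = (\<lambda>y. vec2 x y) -` P0" by auto
  then show ?thesis
    using continuous_closed_vimage[OF compact_imp_closed[OF compact_P0] continuous_vec2_right]
    by metis
qed

lemma upper_pt_in_P0: "x \<in> {xl..xr} \<Longrightarrow> upper_pt x \<in> P0"
  using closed_contains_Sup[OF _ column_bdd_above column_closed] column_nonempty
  by (auto simp: upper_def)

lemma le_upper: "vec2 x y \<in> P0 \<Longrightarrow> y \<le> upper x"
  unfolding upper_def by (rule cSup_upper) (auto simp: column_bdd_above)

lemma second_coord_le_upper: "p \<in> P0 \<Longrightarrow> p$2 \<le> upper (p$1)"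
  using le_upper[of "p$1" "p$2"] by simp

lemma upper_pt_not_interior:
  assumes "x \<in> {xl..xr}"
  shows "upper_pt x \<notin> interior P0"
proof
  assume "upper_pt x \<in> interior P0"
  then obtain e where e: "e > 0" "ball (upper_pt x) e \<subseteq> P0" by (auto simp: mem_interior)
  have "dist (upper_pt x) (vec2 x (upper x + e/2)) = e/2" using e by (simp add: dist_vec2_vertical)
  then have "vec2 x (upper x + e/2) \<in> P0" using e by auto
  then show False using le_upper e(1) by fastforce
qed

lemma upper_pt_in_region: "x \<in> {xl..xr} \<Longrightarrow> upper_pt x \<in> region"
  using upper_pt_in_P0 upper_pt_not_interior holes_in_interior box_subset_cbox
  unfolding region_def by blast

lemma concave_upper: "concave_on {xl..xr} upper"
  unfolding concave_on_iff
proof (intro conjI convex_real_interval ballI allI impI)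
  fix x y u v :: real
  assume "x \<in> {xl..xr}" "y \<in> {xl..xr}" "0 \<le> u" "0 \<le> v" "u + v = 1"
  then have "u *\<^sub>R upper_pt x + v *\<^sub>R upper_pt y \<in> P0"
    using convexD[OF convex_P0 upper_pt_in_P0 upper_pt_in_P0] by blast
  moreover have "u *\<^sub>R upper_pt x + v *\<^sub>R upper_pt y = vec2 (u *\<^sub>R x + v *\<^sub>R y) (u * upper x + v * upper y)"
    by (simp add: pt_eq_iff)
  ultimately show "u * upper x + v * upper y \<le> upper (u *\<^sub>R x + v *\<^sub>R y)"
    by (metis le_upper)
qed

lemma summit_bounds: "pT$1 \<in> {xl..xr}"
  using first_coord_bounds summit(1) by blast

lemma upper_summit: "upper (pT$1) = pT$2"
  using summit upper_pt_in_P0[OF summit_bounds] second_coord_le_upper[OF summit(1)]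
  by (metis order_antisym vec2_nth(1,2))

lemma upper_pt_summit: "upper_pt (pT$1) = pT"
  by (simp add: pt_eq_iff upper_summit)

lemma upper_le_summit: "x \<in> {xl..xr} \<Longrightarrow> upper x \<le> upper (pT$1)"
  using summit(2)[OF upper_pt_in_P0] by (simp add: upper_summit)

lemma upper_upper_semicontinuous:
  assumes x: "x \<in> {xl..xr}" and e: "e > 0"
  shows "\<exists>d>0. \<forall>y\<in>{xl..xr}. \<bar>y - x\<bar> < d \<longrightarrow> upper y < upper x + e"
proof -
  define K where "K = (\<lambda>p. p$1) ` (P0 \<inter> {p. upper x + e \<le> p$2})"
  have "compact (P0 \<inter> {p::pt. upper x + e \<le> p$2})"
    using compact_P0 by (intro compact_Int_closed closed_Collect_le continuous_intros)
  then have "compact K"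
    unfolding K_def by (intro compact_continuous_image linear_continuous_on) auto
  then have "open (- K)" by (simp add: compact_imp_closed open_Compl)
  moreover have "x \<notin> K"
    using second_coord_le_upper e by (force simp: K_def)
  ultimately obtain d where d: "d > 0" "ball x d \<subseteq> - K"
    using open_contains_ball by blast
  have "upper y < upper x + e" if "y \<in> {xl..xr}" "\<bar>y - x\<bar> < d" for y
  proof (rule ccontr)
    assume "\<not> upper y < upper x + e"
    then have "y \<in> K" using upper_pt_in_P0[OF that(1)] unfolding K_def by force
    moreover have "y \<in> ball x d" using that by (simp add: dist_real_def abs_minus_commute)
    ultimately show False using d by blast
  qed
  then show ?thesis using d by blast
qed

lemma continuous_on_upper: "continuous_on {xl..xr} upper"
  unfolding continuous_on_iff
proof (intro ballI allI impI)
  fix x e :: real assume x: "x \<in> {xl..xr}" and e: "e > 0"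
  obtain d1 where "d1 > 0" "\<forall>y\<in>{xl..xr}. \<bar>y - x\<bar> < d1 \<longrightarrow> upper x - e < upper y"
    using concave_on_Icc_lower_semicontinuous[OF concave_upper x e] by blast
  moreover obtain d2 where "d2 > 0" "\<forall>y\<in>{xl..xr}. \<bar>y - x\<bar> < d2 \<longrightarrow> upper y < upper x + e"
    using upper_upper_semicontinuous[OF x e] by blast
  ultimately show "\<exists>d>0. \<forall>y\<in>{xl..xr}. dist y x < d \<longrightarrow> dist (upper y) (upper x) < e"
    by (intro exI[of _ "min d1 d2"]) (auto simp: dist_real_def abs_less_iff)
qed

lemma hole_margin: "\<exists>\<delta>>0. \<forall>i\<in>I. \<forall>z\<in>cbox (A i) (B i). ball z \<delta> \<subseteq> interior P0"
proof -
  have "compact (\<Union>i\<in>I. cbox (A i) (B i))" using finite_holes by (intro compact_UN) auto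
  moreover have "(\<Union>i\<in>I. cbox (A i) (B i)) \<subseteq> interior P0" using holes_in_interior by blast
  ultimately obtain e where "e > 0" "(\<Union>z\<in>(\<Union>i\<in>I. cbox (A i) (B i)). ball z e) \<subseteq> interior P0"
    using compact_subset_open_imp_ball_epsilon_subset[of _ "interior P0"] by blast
  then show ?thesis by blast
qed

lemma short_chord_in_region:
  assumes margin: "\<forall>i\<in>I. \<forall>z\<in>cbox (A i) (B i). ball z \<delta> \<subseteq> interior P0"
    and x: "x \<in> {xl..xr}" and y: "y \<in> {xl..xr}" and short: "dist (upper_pt x) (upper_pt y) < \<delta>"
  shows "closed_segment (upper_pt x) (upper_pt y) \<subseteq> region"
proof
  fix z assume z: "z \<in> closed_segment (upper_pt x) (upper_pt y)"
  have "z \<notin> box (A i) (B i)" if i: "i \<in> I" for i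
  proof
    assume "z \<in> box (A i) (B i)"
    then have "ball z \<delta> \<subseteq> interior P0" using margin i box_subset_cbox by blast
    moreover have "dist z (upper_pt x) < \<delta>" using dist_in_closed_segment[OF z] short by linarith
    ultimately show False using upper_pt_not_interior[OF x] by (auto simp: dist_commute)
  qed
  moreover have "z \<in> P0"
    using z closed_segment_subset[OF upper_pt_in_P0[OF x] upper_pt_in_P0[OF y] convex_P0] by blast
  ultimately show "z \<in> region" unfolding region_def by blast
qed

lemma path_along_upper:
  assumes "xl \<le> x1" "x1 \<le> x2" "x2 \<le> xr"
    and monotone: "mono_on {x1..x2} upper \<or> antimono_on {x1..x2} upper"
  shows "\<exists>ps. polygonal_path region (upper_pt x1) (upper_pt x2) ps \<and>
    path_len ps \<le> (x2 - x1) + \<bar>upper x2 - upper x1\<bar>"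
proof -
  obtain \<delta> where \<delta>: "\<delta> > 0" "\<forall>i\<in>I. \<forall>z\<in>cbox (A i) (B i). ball z \<delta> \<subseteq> interior P0"
    using hole_margin by blast
  obtain \<eta> where \<eta>: "\<eta> > 0"
    "\<forall>y\<in>{xl..xr}. \<forall>z\<in>{xl..xr}. dist z y < \<eta> \<longrightarrow> dist (upper z) (upper y) < \<delta>/2"
    using compact_uniformly_continuous[OF continuous_on_upper compact_Icc] \<delta>(1)
    unfolding uniformly_continuous_on_def by (meson half_gt_zero)
  obtain n h where n: "n \<ge> 1" and h: "0 \<le> h" "h < min \<eta> (\<delta>/2)" "real n * h = x2 - x1"
    using uniform_partition[OF assms(2), of "min \<eta> (\<delta>/2)"] \<eta>(1) \<delta>(1) by auto
  define \<xi> where "\<xi> k = x1 + real k * h" for k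
  have \<xi>_step: "\<xi> (Suc k) = \<xi> k + h" for k by (simp add: \<xi>_def algebra_simps)
  have \<xi>_range: "\<xi> k \<in> {x1..x2}" if "k \<le> n" for k
    using mult_right_mono[of "real k" "real n" h] that h by (simp add: \<xi>_def)
  have \<xi>_in: "\<xi> k \<in> {x1..x2}" "\<xi> (Suc k) \<in> {x1..x2}" "\<xi> k \<in> {xl..xr}" "\<xi> (Suc k) \<in> {xl..xr}"
    if "k < n" for k
    using \<xi>_range[of k] \<xi>_range[of "Suc k"] that assms(1,3) by auto
  define \<Delta> where "\<Delta> k = \<bar>upper (\<xi> (Suc k)) - upper (\<xi> k)\<bar>" for k
  have step: "dist (upper_pt (\<xi> k)) (upper_pt (\<xi> (Suc k))) \<le> h + \<Delta> k" "\<Delta> k < \<delta>/2"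
    if "k < n" for k
  proof -
    have "\<bar>\<xi> k - \<xi> (Suc k)\<bar> = h" using \<xi>_step[of k] h(1) by simp
    then show "dist (upper_pt (\<xi> k)) (upper_pt (\<xi> (Suc k))) \<le> h + \<Delta> k"
      using dist_le_sum_abs_component_diff[of "upper_pt (\<xi> k)" "upper_pt (\<xi> (Suc k))"]
        abs_minus_commute[of "upper (\<xi> k)"] by (simp add: \<Delta>_def)
    have "dist (\<xi> (Suc k)) (\<xi> k) < \<eta>" using h \<xi>_step[of k] by (simp add: dist_real_def)
    then show "\<Delta> k < \<delta>/2" using \<eta>(2) \<xi>_in[OF that] by (simp add: \<Delta>_def dist_real_def)
  qed
  have chords: "closed_segment (upper_pt (\<xi> k)) (upper_pt (\<xi> (Suc k))) \<subseteq> region" if "k < n" for k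
  proof (rule short_chord_in_region[OF \<delta>(2)])
    show "\<xi> k \<in> {xl..xr}" "\<xi> (Suc k) \<in> {xl..xr}" using \<xi>_in[OF that] by simp_all
    show "dist (upper_pt (\<xi> k)) (upper_pt (\<xi> (Suc k))) < \<delta>" using step[OF that] h(2) by linarith
  qed
  have "(\<Sum>k<n. \<Delta> k) = \<bar>upper x2 - upper x1\<bar>"
  proof -
    have "\<xi> k \<le> \<xi> (Suc k)" for k using \<xi>_step[of k] h(1) by simp
    then have "(\<forall>k<n. upper (\<xi> k) \<le> upper (\<xi> (Suc k))) \<or> (\<forall>k<n. upper (\<xi> (Suc k)) \<le> upper (\<xi> k))"
      using monotone \<xi>_in monotone_onD[of "{x1..x2}" "(\<le>)" "(\<le>)" upper]
        monotone_onD[of "{x1..x2}" "(\<le>)" "\<lambda>x y. y \<le> x" upper] by blast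
    from sum_abs_diff_monotone[OF this] h(3) n show ?thesis by (simp add: \<Delta>_def \<xi>_def)
  qed
  moreover have "(\<Sum>k<n. dist (upper_pt (\<xi> k)) (upper_pt (\<xi> (Suc k)))) \<le> (\<Sum>k<n. h + \<Delta> k)"
    using step by (intro sum_mono) auto
  ultimately have "(\<Sum>k<n. dist (upper_pt (\<xi> k)) (upper_pt (\<xi> (Suc k))))
      \<le> (x2 - x1) + \<bar>upper x2 - upper x1\<bar>"
    using h(3) by (simp add: sum.distrib)
  moreover have "\<xi> 0 = x1" "\<xi> n = x2" using h(3) n by (simp_all add: \<xi>_def)
  ultimately show ?thesis
    using polygonal_path_upt[of n "\<lambda>k. upper_pt (\<xi> k)", OF chords]
    by (intro exI[of _ "map (\<lambda>k. upper_pt (\<xi> k)) [0..<Suc n]"]) simp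
qed

lemma path_along_upper_to_summit:
  assumes "x \<in> {xl..xr}"
  shows "\<exists>ps. polygonal_path region (upper_pt x) pT ps \<and> path_len ps \<le> 2 * dist (upper_pt x) pT"
proof -
  have around_summit: "mono_on ({xl..xr} \<inter> {..pT$1}) upper" "antimono_on ({xl..xr} \<inter> {pT$1..}) upper"
    using concave_on_monotone_around_max[OF concave_upper summit_bounds] upper_le_summit by blast+
  have "\<exists>ps. polygonal_path region (upper_pt x) (upper_pt (pT$1)) ps \<and>
      path_len ps \<le> \<bar>pT$1 - x\<bar> + \<bar>upper (pT$1) - upper x\<bar>"
  proof (cases "x \<le> pT$1")
    case True
    have "mono_on {x..pT$1} upper"
      by (rule mono_on_subset[OF around_summit(1)]) (use assms summit_bounds in auto)
    then show ?thesis using path_along_upper[of x "pT$1"] assms summit_bounds True by auto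
  next
    case False
    have "antimono_on {pT$1..x} upper"
      by (rule monotone_on_subset[OF around_summit(2)]) (use assms summit_bounds in auto)
    then obtain ps where ps: "polygonal_path region (upper_pt (pT$1)) (upper_pt x) ps"
        "path_len ps \<le> (x - pT$1) + \<bar>upper x - upper (pT$1)\<bar>"
      using path_along_upper[of "pT$1" x] assms summit_bounds False by auto
    have "\<bar>pT$1 - x\<bar> = x - pT$1" using False by simp
    then have "polygonal_path region (upper_pt x) (upper_pt (pT$1)) (rev ps) \<and>
        path_len (rev ps) \<le> \<bar>pT$1 - x\<bar> + \<bar>upper (pT$1) - upper x\<bar>"
      using polygonal_path_rev[OF ps(1)] ps(2) abs_minus_commute[of "upper x"] by simp
    then show ?thesis by blast
  qed
  then obtain ps where ps: "polygonal_path region (upper_pt x) pT ps"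
      "path_len ps \<le> \<bar>pT$1 - x\<bar> + \<bar>upper (pT$1) - upper x\<bar>"
    using upper_pt_summit by auto
  moreover have "\<bar>pT$1 - x\<bar> + \<bar>upper (pT$1) - upper x\<bar> \<le> 2 * dist (upper_pt x) pT"
    using sum_abs_component_diff_le_dist[of "upper_pt x" pT] abs_minus_commute[of x "pT$1"]
      abs_minus_commute[of "upper x" "pT$2"] by (simp add: upper_summit)
  ultimately show ?thesis by force
qed

lemma hole_lower_left_boundary_in_region:
  assumes i: "i \<in> I" and w: "w \<in> cbox (A i) (B i)" and edge: "w$1 = A i$1 \<or> w$2 = A i$2"
  shows "w \<in> region"
proof -
  have "w \<in> P0" using holes_in_interior[OF i] w interior_subset by blast
  moreover have "w \<notin> box (A i) (B i)" using edge unfolding mem_box_cart by (metis less_irrefl)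
  moreover have "w \<notin> box (A j) (B j)" if "j \<in> I" "j \<noteq> i" for j
    using holes_disjoint[OF i that(1)] that(2) w box_subset_cbox by blast
  ultimately show ?thesis unfolding region_def by blast
qed

lemma lowest_hole_on_column:
  assumes p: "p \<in> region" and i: "i \<in> I"
    and hit: "closed_segment p (upper_pt (p$1)) \<inter> box (A i) (B i) \<noteq> {}"
  obtains k where "k \<in> I" "A k$1 < p$1" "p$1 < B k$1" "p$2 \<le> A k$2" "A k$2 < B k$2"
    "closed_segment p (vec2 (p$1) (A k$2)) \<subseteq> region"
proof -
  define seg where "seg = closed_segment p (upper_pt (p$1))"
  have p0: "p \<in> P0" using p region_subset by blast
  have seg_P0: "seg \<subseteq> P0"
    unfolding seg_def using closed_segment_subset[OF p0 upper_pt_in_P0 convex_P0] first_coord_bounds[OF p0] .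
  have p_below: "p$2 \<le> upper (p$1)" using second_coord_le_upper[OF p0] .
  define J where "J = {j\<in>I. seg \<inter> box (A j) (B j) \<noteq> {}}"
  have "finite J" "J \<noteq> {}" using finite_holes i hit by (auto simp: J_def seg_def)
  then obtain k where "is_arg_min (\<lambda>j. A j$2) (\<lambda>j. j \<in> J) k"
    using ex_is_arg_min_if_finite by blast
  then have kJ: "k \<in> J" and lowest: "\<And>j. j \<in> J \<Longrightarrow> A k$2 \<le> A j$2"
    by (auto simp: is_arg_min_linorder)
  then obtain z where z: "z \<in> seg" "z \<in> box (A k) (B k)" and kI: "k \<in> I" by (auto simp: J_def)
  have "z$1 = p$1" using closed_segment_component_eq[OF z(1)[unfolded seg_def], of 1] by simp
  moreover have "p$2 \<le> z$2 \<and> z$2 \<le> upper (p$1)"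
    using closed_segment_component_bounds[OF z(1)[unfolded seg_def], of 2] p_below by simp
  moreover have "p \<notin> box (A k) (B k)" using p kI unfolding region_def by blast
  ultimately have k: "A k$1 < p$1" "p$1 < B k$1" "p$2 \<le> A k$2" "A k$2 < B k$2" "A k$2 \<le> upper (p$1)"
    using z(2) by (auto simp: mem_box_cart forall_2)
  have "vec2 (p$1) (A k$2) \<in> seg"
    unfolding seg_def using vec2_in_vertical_segment[of p "upper_pt (p$1)"] k by simp
  then have sub_seg: "closed_segment p (vec2 (p$1) (A k$2)) \<subseteq> seg"
    by (intro closed_segment_subset) (auto simp: seg_def)
  have "closed_segment p (vec2 (p$1) (A k$2)) \<subseteq> region"
  proof
    fix w assume w: "w \<in> closed_segment p (vec2 (p$1) (A k$2))"
    have "w$2 \<le> A k$2" using closed_segment_component_bounds[OF w, of 2] k by simp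
    have "w \<notin> box (A j) (B j)" if "j \<in> I" for j
    proof
      assume wb: "w \<in> box (A j) (B j)"
      then have "j \<in> J" using w sub_seg that unfolding J_def by blast
      then have "A k$2 \<le> A j$2" by (rule lowest)
      moreover have "A j$2 < w$2" using wb by (simp add: mem_box_cart)
      ultimately show False using \<open>w$2 \<le> A k$2\<close> by simp
    qed
    then show "w \<in> region" using w sub_seg seg_P0 unfolding region_def by blast
  qed
  with kI k that show thesis by blast
qed

lemma detour_around_hole:
  assumes p: "p \<in> region" and i: "i \<in> I"
    and hit: "closed_segment p (upper_pt (p$1)) \<inter> box (A i) (B i) \<noteq> {}"
  obtains q ps where "q \<in> region" "polygonal_path region p q ps"
    "path_len ps = (p$1 - q$1) + (q$2 - p$2)"
    "{j\<in>I. q$2 < B j$2} \<subset> {j\<in>I. p$2 < B j$2}"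
proof -
  obtain k where k: "k \<in> I" "A k$1 < p$1" "p$1 < B k$1" "p$2 \<le> A k$2" "A k$2 < B k$2"
    and up: "closed_segment p (vec2 (p$1) (A k$2)) \<subseteq> region"
    using lowest_hole_on_column[OF assms] by blast
  define c where "c = vec2 (p$1) (A k$2)"
  define q where "q = vec2 (A k$1) (B k$2)"
  have in_hole: "c \<in> cbox (A k) (B k)" "A k \<in> cbox (A k) (B k)" "q \<in> cbox (A k) (B k)"
    using k by (auto simp: c_def q_def mem_box_cart forall_2)
  have left: "closed_segment c (A k) \<subseteq> region"
  proof
    fix w assume w: "w \<in> closed_segment c (A k)"
    have "w \<in> cbox (A k) (B k)"
      using w closed_segment_subset[OF in_hole(1,2) convex_box(1)] by blast
    moreover have "w$2 = A k$2" using closed_segment_component_eq[OF w, of 2 "A k$2"] by (simp add: c_def)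
    ultimately show "w \<in> region" using hole_lower_left_boundary_in_region[OF k(1)] by blast
  qed
  have up_left: "closed_segment (A k) q \<subseteq> region"
  proof
    fix w assume w: "w \<in> closed_segment (A k) q"
    have "w \<in> cbox (A k) (B k)"
      using w closed_segment_subset[OF in_hole(2,3) convex_box(1)] by blast
    moreover have "w$1 = A k$1" using closed_segment_component_eq[OF w, of 1 "A k$1"] by (simp add: q_def)
    ultimately show "w \<in> region" using hole_lower_left_boundary_in_region[OF k(1)] by blast
  qed
  have "polygonal_path region p q [p, c, A k, q]"
    using up left up_left by (simp add: polygonal_path_Cons polygonal_path_singleton c_def)
  moreover have "path_len [p, c, A k, q] = (p$1 - q$1) + (q$2 - p$2)"
  proof -
    have "dist p c = A k$2 - p$2"
      using dist_vec2_vertical[of "p$1" "p$2" "A k$2"] k by (simp add: c_def)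
    moreover have "dist c (A k) = p$1 - A k$1"
      using dist_vec2_horizontal[of "p$1" "A k$2" "A k$1"] k by (simp add: c_def)
    moreover have "dist (A k) q = B k$2 - A k$2"
      using dist_vec2_vertical[of "A k$1" "A k$2" "B k$2"] k by (simp add: q_def)
    ultimately show ?thesis by (simp add: q_def)
  qed
  moreover have "q \<in> region"
    using hole_lower_left_boundary_in_region[OF k(1) in_hole(3)] by (simp add: q_def)
  moreover have "{j\<in>I. q$2 < B j$2} \<subset> {j\<in>I. p$2 < B j$2}"
  proof -
    have "{j\<in>I. q$2 < B j$2} \<subseteq> {j\<in>I. p$2 < B j$2}" using k by (auto simp: q_def)
    moreover have "k \<in> {j\<in>I. p$2 < B j$2}" "k \<notin> {j\<in>I. q$2 < B j$2}" using k by (simp_all add: q_def)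
    ultimately show ?thesis by blast
  qed
  ultimately show thesis using that by blast
qed

lemma staircase_to_upper:
  assumes "p \<in> region"
  shows "\<exists>x ps. x \<in> {xl..xr} \<and> polygonal_path region p (upper_pt x) ps \<and>
    path_len ps \<le> (p$1 - x) + (upper x - p$2)"
  using assms
  \<comment> \<open>each detour climbs above the top of one more hole\<close>
proof (induction "card {i\<in>I. p$2 < B i$2}" arbitrary: p rule: less_induct)
  case less
  have p0: "p \<in> P0" using less.prems region_subset by blast
  show ?case
  proof (cases "\<exists>i\<in>I. closed_segment p (upper_pt (p$1)) \<inter> box (A i) (B i) \<noteq> {}")
    case True
    then obtain q ps where q: "q \<in> region" "polygonal_path region p q ps"
        "path_len ps = (p$1 - q$1) + (q$2 - p$2)" "{j\<in>I. q$2 < B j$2} \<subset> {j\<in>I. p$2 < B j$2}"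
      using detour_around_hole[OF less.prems] by blast
    have "card {j\<in>I. q$2 < B j$2} < card {j\<in>I. p$2 < B j$2}"
      using psubset_card_mono[OF _ q(4)] finite_holes by simp
    then obtain x qs where "x \<in> {xl..xr}" "polygonal_path region q (upper_pt x) qs"
        "path_len qs \<le> (q$1 - x) + (upper x - q$2)"
      using less.hyps[OF _ q(1)] by blast
    then show ?thesis
      using polygonal_path_append[OF q(2)] q(3) by (intro exI[of _ x] exI[of _ "ps @ tl qs"]) auto
  next
    case False
    then have "closed_segment p (upper_pt (p$1)) \<subseteq> region"
      using closed_segment_subset[OF p0 upper_pt_in_P0 convex_P0] first_coord_bounds[OF p0]
      unfolding region_def by blast
    moreover have "dist p (upper_pt (p$1)) = upper (p$1) - p$2"
      using dist_vec2_vertical[of "p$1" "p$2" "upper (p$1)"] second_coord_le_upper[OF p0] by simp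
    ultimately show ?thesis
      using polygonal_path_segment first_coord_bounds[OF p0]
      by (intro exI[of _ "p$1"] exI[of _ "[p, upper_pt (p$1)]"]) simp
  qed
qed

lemma path_to_summit:
  assumes s: "s \<in> region"
  shows "\<exists>ps. polygonal_path region s pT ps \<and> path_len ps \<le> 4 * diam2 region"
proof -
  obtain x ps where x: "x \<in> {xl..xr}" and ps: "polygonal_path region s (upper_pt x) ps"
      "path_len ps \<le> (s$1 - x) + (upper x - s$2)"
    using staircase_to_upper[OF s] by blast
  obtain qs where qs: "polygonal_path region (upper_pt x) pT qs" "path_len qs \<le> 2 * dist (upper_pt x) pT"
    using path_along_upper_to_summit[OF x] by blast
  have "(s$1 - x) + (upper x - s$2) \<le> 2 * dist s (upper_pt x)"
    using sum_abs_component_diff_le_dist[of s "upper_pt x"]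
      abs_ge_self[of "s$1 - x"] abs_ge_minus_self[of "s$2 - upper x"] by simp
  also have "\<dots> \<le> 2 * diam2 region"
    using dist_le_diam2[OF bounded_region s upper_pt_in_region[OF x]] by simp
  finally have "path_len ps \<le> 2 * diam2 region" using ps(2) by linarith
  moreover have "path_len qs \<le> 2 * diam2 region"
    using qs(2) dist_le_diam2[OF bounded_region upper_pt_in_region[OF x] upper_pt_in_region[OF summit_bounds]]
    by (simp add: upper_pt_summit)
  ultimately show ?thesis
    using polygonal_path_append[OF ps(1) qs(1)] by (intro exI[of _ "ps @ tl qs"]) simp
qed

lemma geod_region_le: "s \<in> region \<Longrightarrow> t \<in> region \<Longrightarrow> geod region s t \<le> 8 * diam2 region"
proof -
  assume "s \<in> region" "t \<in> region"
  then obtain ps qs where ps: "polygonal_path region s pT ps" "path_len ps \<le> 4 * diam2 region"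
    and qs: "polygonal_path region t pT qs" "path_len qs \<le> 4 * diam2 region"
    using path_to_summit by blast
  note via_summit = polygonal_path_append[OF ps(1) polygonal_path_rev[OF qs(1), THEN conjunct1]]
  then have "geod region s t \<le> path_len ps + path_len (rev qs)"
    using geod_le_path_len[OF via_summit[THEN conjunct1]] by simp
  then show ?thesis using ps(2) qs(2) polygonal_path_rev[OF qs(1)] by simp
qed

lemma diam2_region_pos: "diam2 region > 0"
proof -
  have "xr - xl \<le> dist (upper_pt xl) (upper_pt xr)"
    using abs_component_diff_le_dist[of "upper_pt xl" 1 "upper_pt xr"] by simp
  also have "\<dots> \<le> diam2 region"
    using width_pos by (intro dist_le_diam2 bounded_region upper_pt_in_region) auto
  finally show ?thesis using width_pos by simp
qed

theorem rho_region_le: "rho region \<le> 8"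
proof (rule rho_le)
  show "region \<noteq> {}" using upper_pt_in_region[of xl] width_pos by auto
qed (use diam2_region_pos geod_region_le in auto)

end

lemma interior_nonempty_first_coord_lt:
  assumes "interior (S::pt set) \<noteq> {}"
  obtains p q where "p \<in> S" "q \<in> S" "p$1 < q$1"
proof -
  obtain z e where e: "e > 0" "ball z e \<subseteq> S"
    using assms by (auto simp: mem_interior)
  have "dist z (vec2 (z$1 + e/2) (z$2)) = e/2"
    using dist_vec2_horizontal[of "z$1" "z$2" "z$1 + e/2"] e(1) by simp
  then have "vec2 (z$1 + e/2) (z$2) \<in> S" using e by auto
  moreover have "z \<in> S" using e by auto
  ultimately show thesis using that e(1) by (metis vec2_nth(1) less_add_same_cancel1 half_gt_zero)
qed

lemma rectangle_holes_of_class_C: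
  assumes "in_class_C h P0 H" "\<forall>i\<in>{1..h}. axis_rectangle (H i)"
  obtains A B pl pr pT where "rectangle_holes P0 {1..h} A B pl pr pT"
    "polygonal_domain P0 h H = rectangle_holes.region P0 {1..h} A B"
proof -
  have "\<forall>i\<in>{1..h}. \<exists>ab. H i = cbox (fst ab) (snd ab)"
    using assms(2) unfolding axis_rectangle_def by force
  then obtain corners where corners: "\<And>i. i \<in> {1..h} \<Longrightarrow> H i = cbox (fst (corners i)) (snd (corners i))"
    by metis
  define A where "A i = fst (corners i)" for i
  define B where "B i = snd (corners i)" for i
  obtain V where V: "finite V" "P0 = convex hull V" and int: "interior P0 \<noteq> {}"
    using assms(1) unfolding in_class_C_def convex_polygon_def by blast
  have cpt: "compact P0" using V by (simp add: finite_imp_compact_convex_hull)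
  have ne: "P0 \<noteq> {}" using int interior_subset by blast
  have c1: "continuous_on P0 (\<lambda>p::pt. p$1)" and c2: "continuous_on P0 (\<lambda>p::pt. p$2)"
    by (intro linear_continuous_on bounded_linear_vec_nth)+
  obtain pl where pl: "pl \<in> P0" "\<And>p. p \<in> P0 \<Longrightarrow> pl$1 \<le> p$1"
    using continuous_attains_inf[OF cpt ne c1] by blast
  obtain pr where pr: "pr \<in> P0" "\<And>p. p \<in> P0 \<Longrightarrow> p$1 \<le> pr$1"
    using continuous_attains_sup[OF cpt ne c1] by blast
  obtain pT where pT: "pT \<in> P0" "\<And>p. p \<in> P0 \<Longrightarrow> p$2 \<le> pT$2"
    using continuous_attains_sup[OF cpt ne c2] by blast
  obtain p q where "p \<in> P0" "q \<in> P0" "p$1 < q$1"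
    using interior_nonempty_first_coord_lt[OF int] .
  then have "pl$1 < pr$1" using pl(2) pr(2) by fastforce
  moreover have "\<forall>i\<in>{1..h}. H i \<subseteq> interior P0"
    "\<forall>i\<in>{1..h}. \<forall>j\<in>{1..h}. i \<noteq> j \<longrightarrow> H i \<inter> H j = {}"
    using assms(1) unfolding in_class_C_def by auto
  ultimately interpret R: rectangle_holes P0 "{1..h}" A B pl pr pT
    using cpt V pl pr pT corners by unfold_locales (auto simp: A_def B_def)
  have "polygonal_domain P0 h H = R.region"
    unfolding polygonal_domain_def R.region_def
    using corners by (auto simp: A_def B_def interior_cbox)
  then show thesis using that R.rectangle_holes_axioms by blast
qed

theorem proposition2:
  shows "\<exists>C>0. \<forall>(h::nat) P0 (H :: nat \<Rightarrow> pt set).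
           in_class_C h P0 H \<and> (\<forall>i\<in>{1..h}. axis_rectangle (H i)) \<longrightarrow>
           rho (polygonal_domain P0 h H) \<le> C"
proof (intro exI[of _ 8] conjI allI impI)
  fix h :: nat and P0 and H :: "nat \<Rightarrow> pt set"
  assume "in_class_C h P0 H \<and> (\<forall>i\<in>{1..h}. axis_rectangle (H i))"
  then obtain A B pl pr pT where "rectangle_holes P0 {1..h} A B pl pr pT"
      "polygonal_domain P0 h H = rectangle_holes.region P0 {1..h} A B"
    using rectangle_holes_of_class_C by blast
  then show "rho (polygonal_domain P0 h H) \<le> 8" using rectangle_holes.rho_region_le by metis
qed simp

end
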